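(* Let $G$ be a connected bipartite graph with bipartition $(U,V)$, $|U|\ge|V|$. Let $V_W\subseteq V$ be the set of vertices of $V$ adjacent to a leaf, $\overline{V_W}=V\setminus V_W$, $U_L\subseteq U$ a set of leaves such that each $v\in V_W$ is adjacent to exactly one element of $U_L$ and $|U_L|=|V_W|$, and $\overline{U_L}=U\setminus U_L$. For $S\subseteq\overline{U_L}$ and $j\ge1$ let $g_j(S)$ be the number of independent sets $\mathcal C$ of $G$ with $|\mathcal C|=j$ and $\mathcal C\cap\overline{U_L}=S$, and $g(S)=\sum_{j=1}^{\alpha(G)}(-1)^{j-1}g_j(S)$. Suppose $\overline{V_W}\neq\emptyset$. Then $g(\emptyset)=1$, and for nonempty $S\subseteq \overline{U_L}$, $g(S)=(-1)^{|S|+|V_W|+1}$ if $N(S)=\overline{V_W}$ and $g(S)=0$ otherwise.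
   Context: A leaf is a vertex with exactly one neighbor. $N(S)$ is the set of vertices adjacent to some vertex of $S$. An independent set is a set of pairwise non-adjacent vertices; $\alpha(G)$ is the maximum size of one. *)

theory Defs
  imports Main
begin

definition simple_graph :: "'a set \<Rightarrow> ('a \<Rightarrow> 'a \<Rightarrow> bool) \<Rightarrow> bool" where
  "simple_graph Vs E \<longleftrightarrow> finite Vs \<and> (\<forall>x y. E x y \<longrightarrow> x \<in> Vs \<and> y \<in> Vs)
     \<and> (\<forall>x y. E x y \<longrightarrow> E y x) \<and> (\<forall>x. \<not> E x x)"

definition connected_graph :: "'a set \<Rightarrow> ('a \<Rightarrow> 'a \<Rightarrow> bool) \<Rightarrow> bool" where
  "connected_graph Vs E \<longleftrightarrow> Vs \<noteq> {} \<and> (\<forall>x\<in>Vs. \<forall>y\<in>Vs. E\<^sup>*\<^sup>* x y)"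

definition bipartition :: "'a set \<Rightarrow> ('a \<Rightarrow> 'a \<Rightarrow> bool) \<Rightarrow> 'a set \<Rightarrow> 'a set \<Rightarrow> bool" where
  "bipartition Vs E U V \<longleftrightarrow> U \<union> V = Vs \<and> U \<inter> V = {}
     \<and> (\<forall>x y. E x y \<longrightarrow> (x \<in> U \<and> y \<in> V) \<or> (x \<in> V \<and> y \<in> U))"

definition nbrs :: "'a set \<Rightarrow> ('a \<Rightarrow> 'a \<Rightarrow> bool) \<Rightarrow> 'a \<Rightarrow> 'a set" where
  "nbrs Vs E v = {w \<in> Vs. E v w}"

definition leaf :: "'a set \<Rightarrow> ('a \<Rightarrow> 'a \<Rightarrow> bool) \<Rightarrow> 'a \<Rightarrow> bool" where
  "leaf Vs E v \<longleftrightarrow> v \<in> Vs \<and> card (nbrs Vs E v) = 1"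

definition nbhd :: "'a set \<Rightarrow> ('a \<Rightarrow> 'a \<Rightarrow> bool) \<Rightarrow> 'a set \<Rightarrow> 'a set" where
  "nbhd Vs E S = {w \<in> Vs. \<exists>s\<in>S. E s w}"

definition indep_set :: "'a set \<Rightarrow> ('a \<Rightarrow> 'a \<Rightarrow> bool) \<Rightarrow> 'a set \<Rightarrow> bool" where
  "indep_set Vs E C \<longleftrightarrow> C \<subseteq> Vs \<and> (\<forall>x\<in>C. \<forall>y\<in>C. \<not> E x y)"

definition indep_number :: "'a set \<Rightarrow> ('a \<Rightarrow> 'a \<Rightarrow> bool) \<Rightarrow> nat" where
  "indep_number Vs E = Max (card ` {C. indep_set Vs E C})"

definition gj :: "'a set \<Rightarrow> ('a \<Rightarrow> 'a \<Rightarrow> bool) \<Rightarrow> 'a set \<Rightarrow> nat \<Rightarrow> 'a set \<Rightarrow> nat" where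
  "gj Vs E Ubar j S = card {C. indep_set Vs E C \<and> card C = j \<and> C \<inter> Ubar = S}"

definition gfun :: "'a set \<Rightarrow> ('a \<Rightarrow> 'a \<Rightarrow> bool) \<Rightarrow> 'a set \<Rightarrow> 'a set \<Rightarrow> int" where
  "gfun Vs E Ubar S = (\<Sum>j=1..indep_number Vs E. (-1) ^ (j - 1) * int (gj Vs E Ubar j S))"

end

theory Submission
  imports Defs
begin

(* An independent set C with C \<inter> (U - U_L) = S is S together with an independent subset
   of X_S = U_L \<union> (V - N(S)), so up to the sign (-1)^|S| and the contribution of the empty set,
   g(S) is the independence polynomial of G[X_S] evaluated at -1.  By the deletion recurrence
   this value vanishes as soon as G[X_S] has an isolated vertex, and equals (-1)^m when G[X_S]
   is a perfect matching with m edges.  If N(S) = V - V_W, then X_S = U_L \<union> V_W is matched by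
   the leaf edges; otherwise a vertex of (V - V_W) - N(S), or the leaf attached to a vertex of
   V_W \<inter> N(S), is isolated in G[X_S]. *)

definition alt_indep_sum :: "'a set \<Rightarrow> ('a \<Rightarrow> 'a \<Rightarrow> bool) \<Rightarrow> int" where
  "alt_indep_sum X E = (\<Sum>D | indep_set X E D. (-1) ^ card D)"

lemma finite_indep_sets: "finite X \<Longrightarrow> finite {D. indep_set X E D}"
  unfolding indep_set_def by (rule finite_subset[of _ "Pow X"]) auto

lemma nbrs_Diff: "nbrs (X - A) E v = nbrs X E v - A"
  unfolding nbrs_def by auto

lemma alt_indep_sum_remove:
  assumes "finite X" "v \<in> X" "symp E" "irreflp E"
  shows "alt_indep_sum X E =
    alt_indep_sum (X - {v}) E - alt_indep_sum (X - insert v (nbrs X E v)) E"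
proof -
  let ?I = "\<lambda>Y. {D. indep_set Y E D}" and ?sgn = "\<lambda>D. (-1::int) ^ card D"
  let ?Y = "X - insert v (nbrs X E v)"
  have without_v: "?I X - {D. v \<in> D} = ?I (X - {v})"
    by (auto simp: indep_set_def)
  have with_v: "?I X \<inter> {D. v \<in> D} = insert v ` ?I ?Y"
  proof (intro equalityI subsetI)
    fix D assume D: "D \<in> ?I X \<inter> {D. v \<in> D}"
    then have "D - {v} \<in> ?I ?Y"
      using \<open>symp E\<close> by (auto simp: indep_set_def nbrs_def dest: sympD)
    with D show "D \<in> insert v ` ?I ?Y" by (auto intro!: image_eqI[of _ _ "D - {v}"])
  next
    fix D assume "D \<in> insert v ` ?I ?Y"
    then show "D \<in> ?I X \<inter> {D. v \<in> D}"
      using assms(2-4) by (auto simp: indep_set_def nbrs_def dest: sympD irreflpD)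
  qed
  have "inj_on (insert v) (?I ?Y)"
    by (rule inj_onI) (auto simp: indep_set_def)
  have "alt_indep_sum X E = sum ?sgn (?I X \<inter> {D. v \<in> D}) + sum ?sgn (?I X - {D. v \<in> D})"
    unfolding alt_indep_sum_def by (rule sum.Int_Diff[OF finite_indep_sets[OF \<open>finite X\<close>]])
  also have "sum ?sgn (?I X - {D. v \<in> D}) = alt_indep_sum (X - {v}) E"
    unfolding without_v alt_indep_sum_def ..
  also have "sum ?sgn (?I X \<inter> {D. v \<in> D}) = (\<Sum>D\<in>?I ?Y. ?sgn (insert v D))"
    unfolding with_v using \<open>inj_on (insert v) (?I ?Y)\<close> by (simp add: sum.reindex)
  also have "\<dots> = - alt_indep_sum ?Y E"
    unfolding alt_indep_sum_def sum_negf[symmetric]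
  proof (intro sum.cong refl)
    fix D assume "D \<in> ?I ?Y"
    then have "finite D" "v \<notin> D"
      using \<open>finite X\<close> by (auto simp: indep_set_def finite_subset)
    then show "?sgn (insert v D) = - ?sgn D" by simp
  qed
  finally show ?thesis by simp
qed

lemma alt_indep_sum_isolated:
  assumes "finite X" "v \<in> X" "symp E" "irreflp E" "nbrs X E v = {}"
  shows "alt_indep_sum X E = 0"
  using alt_indep_sum_remove[OF assms(1-4)] assms(5) by simp

lemma alt_indep_sum_remove_edge:
  assumes "finite X" "symp E" "irreflp E" "nbrs X E v = {u}" "nbrs X E u = {v}"
  shows "alt_indep_sum X E = - alt_indep_sum (X - {u, v}) E"
proof -
  have "v \<in> X" "u \<in> X" "E v u" using assms(4,5) by (auto simp: nbrs_def)
  then have "u \<noteq> v" using \<open>irreflp E\<close> by (auto dest: irreflpD)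
  have "alt_indep_sum (X - {v}) E = 0"
    using assms \<open>u \<in> X\<close> \<open>u \<noteq> v\<close>
    by (intro alt_indep_sum_isolated[of _ u]) (auto simp: nbrs_Diff)
  then show ?thesis
    using alt_indep_sum_remove[OF assms(1) \<open>v \<in> X\<close> assms(2,3)] assms(4)
    by (simp add: insert_commute)
qed

lemma alt_indep_sum_one_regular:
  assumes "finite X" "symp E" "irreflp E" "\<forall>x\<in>X. card (nbrs X E x) = 1"
  shows "alt_indep_sum X E = (-1) ^ (card X div 2)"
  using assms(1,4)
proof (induction "card X" arbitrary: X rule: less_induct)
  case (less X)
  have unique_nbr: "\<exists>y. nbrs X E x = {y}" if "x \<in> X" for x
    using less.prems(2) that by (simp add: card_1_singleton_iff)
  have only_nbr: "w = y" if "nbrs X E x = {y}" "w \<in> X" "E w x" for x y w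
    using that \<open>symp E\<close> by (auto simp: nbrs_def dest: sympD)
  show ?case
  proof (cases "X = {}")
    case True
    then have "{D. indep_set X E D} = {{}}" by (auto simp: indep_set_def)
    with True show ?thesis by (simp add: alt_indep_sum_def)
  next
    case False
    then obtain v where "v \<in> X" by blast
    then obtain u where u: "nbrs X E v = {u}" using unique_nbr by blast
    then have "u \<in> X" "E v u" by (auto simp: nbrs_def)
    then have "u \<noteq> v" using \<open>irreflp E\<close> by (auto dest: irreflpD)
    have v: "nbrs X E u = {v}"
      using unique_nbr[OF \<open>u \<in> X\<close>] only_nbr \<open>v \<in> X\<close> \<open>E v u\<close> by blast
    define Y where "Y = X - {u, v}"
    have "nbrs Y E w = nbrs X E w" if "w \<in> Y" for w
    proof -
      obtain y where y: "nbrs X E w = {y}" using unique_nbr \<open>w \<in> Y\<close> Y_def by blast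
      then have "y \<in> X" "E w y" by (auto simp: nbrs_def)
      then have "y \<notin> {u, v}" using only_nbr[OF u] only_nbr[OF v] \<open>w \<in> Y\<close> Y_def by blast
      then show ?thesis using y by (auto simp: Y_def nbrs_Diff)
    qed
    then have "\<forall>y\<in>Y. card (nbrs Y E y) = 1" using less.prems(2) Y_def by simp
    moreover have "card Y = card X - 2" "card X \<ge> 2"
      using less.prems(1) \<open>v \<in> X\<close> \<open>u \<in> X\<close> \<open>u \<noteq> v\<close> card_mono[of X "{u, v}"]
      by (simp_all add: Y_def card_Diff_subset)
    ultimately have "alt_indep_sum Y E = (-1) ^ (card Y div 2)"
      "card X div 2 = Suc (card Y div 2)"
      using less.hyps[of Y] less.prems(1) Y_def by auto
    then show ?thesis
      using alt_indep_sum_remove_edge[OF less.prems(1) assms(2,3) u v] Y_def by simp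
  qed
qed

lemma card_le_indep_number:
  assumes "finite Vs" "indep_set Vs E C"
  shows "card C \<le> indep_number Vs E"
  unfolding indep_number_def
  using assms finite_indep_sets[OF assms(1)] by (intro Max_ge) auto

lemma gfun_eq_alt_sum:
  assumes "finite Vs"
  shows "gfun Vs E T S =
    of_bool (S = {}) - (\<Sum>C | indep_set Vs E C \<and> C \<inter> T = S. (-1) ^ card C)"
proof -
  define I where "I = {C. indep_set Vs E C \<and> C \<inter> T = S}"
  define n where "n = indep_number Vs E"
  have "finite I"
    unfolding I_def using finite_indep_sets[OF assms] by (rule rev_finite_subset) auto
  have "card ` I \<subseteq> {0..n}"
    using card_le_indep_number[OF assms] by (auto simp: I_def n_def)
  have count: "card {C \<in> I. card C = j} = gj Vs E T j S" for j
    unfolding gj_def I_def by (rule arg_cong[where f = card]) auto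
  have "{C. indep_set Vs E C \<and> card C = 0 \<and> C \<inter> T = S} = (if S = {} then {{}} else {})"
    using assms by (auto simp: indep_set_def finite_subset)
  then have count_empty: "gj Vs E T 0 S = of_bool (S = {})"
    by (simp add: gj_def)
  have "(\<Sum>C\<in>I. (-1::int) ^ card C) = (\<Sum>j=0..n. \<Sum>C | C \<in> I \<and> card C = j. (-1) ^ card C)"
    by (rule sum.group[OF \<open>finite I\<close> _ \<open>card ` I \<subseteq> {0..n}\<close>, symmetric]) simp
  also have "\<dots> = (\<Sum>j=0..n. (-1) ^ j * int (gj Vs E T j S))"
    by (simp add: count[symmetric] mult.commute)
  also have "\<dots> = of_bool (S = {}) + (\<Sum>j=1..n. (-1) ^ j * int (gj Vs E T j S))"
    by (simp add: sum.atLeast_Suc_atMost count_empty)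
  also have "(\<Sum>j=1..n. (-1) ^ j * int (gj Vs E T j S)) = - gfun Vs E T S"
    unfolding gfun_def n_def[symmetric] sum_negf[symmetric]
    by (intro sum.cong) (auto simp: Suc_le_eq dest!: gr0_implies_Suc)
  finally show ?thesis unfolding I_def by simp
qed

lemma indep_set_Un:
  assumes "symp E"
  shows "indep_set Vs E (S \<union> D) \<longleftrightarrow>
    indep_set Vs E S \<and> indep_set Vs E D \<and> (\<forall>s\<in>S. \<forall>d\<in>D. \<not> E s d)"
  using assms by (auto simp: indep_set_def dest: sympD)

lemma sum_indep_sets_with_trace:
  assumes "simple_graph Vs E" "S \<subseteq> T" "indep_set Vs E S"
  shows "(\<Sum>C | indep_set Vs E C \<and> C \<inter> T = S. (-1::int) ^ card C) =
    (-1) ^ card S * alt_indep_sum (Vs - T - nbhd Vs E S) E"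
proof -
  define X where "X = Vs - T - nbhd Vs E S"
  have "finite Vs" "symp E" "\<And>x y. E x y \<Longrightarrow> y \<in> Vs"
    using assms(1) by (auto simp: simple_graph_def symp_def)
  have "finite S" using assms(3) \<open>finite Vs\<close> by (auto simp: indep_set_def finite_subset)
  have disjoint: "S \<inter> D = {}" if "indep_set X E D" for D
    using that assms(2) by (auto simp: indep_set_def X_def)
  have "{C. indep_set Vs E C \<and> C \<inter> T = S} = (\<union>) S ` {D. indep_set X E D}"
  proof (intro equalityI subsetI)
    fix C assume "C \<in> {C. indep_set Vs E C \<and> C \<inter> T = S}"
    then have "indep_set Vs E C" "C \<inter> T = S" by auto
    then have "indep_set X E (C - S)" "C = S \<union> (C - S)"
      using indep_set_Un[OF \<open>symp E\<close>, of Vs S "C - S"]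
      by (auto simp: indep_set_def X_def nbhd_def)
    then show "C \<in> (\<union>) S ` {D. indep_set X E D}" by blast
  next
    fix C assume "C \<in> (\<union>) S ` {D. indep_set X E D}"
    then obtain D where "indep_set X E D" "C = S \<union> D" by auto
    moreover have "\<not> E s d" if "s \<in> S" "d \<in> D" for s d
      using \<open>indep_set X E D\<close> that \<open>\<And>x y. E x y \<Longrightarrow> y \<in> Vs\<close>
      by (auto simp: indep_set_def X_def nbhd_def)
    ultimately show "C \<in> {C. indep_set Vs E C \<and> C \<inter> T = S}"
      using assms(2,3) indep_set_Un[OF \<open>symp E\<close>, of Vs S D]
      by (auto simp: indep_set_def X_def)
  qed
  moreover have "inj_on ((\<union>) S) {D. indep_set X E D}"
    using disjoint by (intro inj_onI) blast
  moreover have "card (S \<union> D) = card S + card D" if "indep_set X E D" for D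
    using that disjoint[OF that] \<open>finite S\<close> \<open>finite Vs\<close>
    by (intro card_Un_disjoint) (auto simp: indep_set_def X_def finite_subset)
  ultimately show ?thesis
    by (simp add: sum.reindex alt_indep_sum_def X_def sum_distrib_left power_add)
qed

lemma leaf_nbrs:
  assumes "simple_graph Vs E" "leaf Vs E u" "E u w"
  shows "nbrs Vs E u = {w}"
proof -
  have "w \<in> nbrs Vs E u" using assms by (simp add: simple_graph_def nbrs_def)
  with assms(2) show ?thesis by (auto simp: leaf_def card_1_singleton_iff)
qed

locale bipartite_leaf_matching =
  fixes Vs :: "'a set" and E :: "'a \<Rightarrow> 'a \<Rightarrow> bool" and U V UL VW :: "'a set"
  assumes graph: "simple_graph Vs E"
    and bipartite: "bipartition Vs E U V"
    and VW_def: "VW = {v \<in> V. \<exists>u. E v u \<and> leaf Vs E u}"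
    and UL_subset: "UL \<subseteq> U"
    and UL_leaves: "\<forall>u\<in>UL. leaf Vs E u"
    and VW_matched: "\<forall>v\<in>VW. card {u \<in> UL. E v u} = 1"
    and card_UL: "card UL = card VW"
begin

lemma finite_Vs: "finite Vs"
  and symp_E: "symp E"
  and irreflp_E: "irreflp E"
  and edge_in_Vs: "E x y \<Longrightarrow> x \<in> Vs \<and> y \<in> Vs"
  using graph by (auto simp: simple_graph_def symp_def irreflp_def)

lemma edge_between_sides: "E x y \<Longrightarrow> (x \<in> U \<and> y \<in> V) \<or> (x \<in> V \<and> y \<in> U)"
  and Vs_eq: "Vs = U \<union> V"
  and sides_disjoint: "U \<inter> V = {}"
  using bipartite by (auto simp: bipartition_def)

lemma no_edge_within_U: "x \<in> U \<Longrightarrow> y \<in> U \<Longrightarrow> \<not> E x y"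
  and no_edge_within_V: "x \<in> V \<Longrightarrow> y \<in> V \<Longrightarrow> \<not> E x y"
  using edge_between_sides sides_disjoint by blast+

lemma UL_nbrs: "u \<in> UL \<Longrightarrow> \<exists>w\<in>VW. nbrs Vs E u = {w}"
proof -
  assume "u \<in> UL"
  then obtain w where w: "nbrs Vs E u = {w}"
    using UL_leaves by (auto simp: leaf_def card_1_singleton_iff)
  then have "E u w" by (auto simp: nbrs_def)
  then have "w \<in> V" "E w u"
    using \<open>u \<in> UL\<close> UL_subset sides_disjoint edge_between_sides symp_E by (auto dest: sympD)
  then have "w \<in> VW"
    using \<open>u \<in> UL\<close> UL_leaves by (auto simp: VW_def)
  with w show ?thesis by blast
qed

lemma VW_partner: "v \<in> VW \<Longrightarrow> \<exists>u. {u \<in> UL. E v u} = {u}"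
  using VW_matched by (simp add: card_1_singleton_iff)

lemma nbhd_subset_V: "S \<subseteq> U \<Longrightarrow> nbhd Vs E S \<subseteq> V"
  using edge_between_sides sides_disjoint by (auto simp: nbhd_def)

lemma alt_indep_sum_leaf_matching: "alt_indep_sum (UL \<union> VW) E = (-1) ^ card VW"
proof -
  let ?X = "UL \<union> VW"
  have "VW \<subseteq> V" by (auto simp: VW_def)
  have "?X \<subseteq> Vs" using UL_subset \<open>VW \<subseteq> V\<close> Vs_eq by blast
  then have "finite ?X" using finite_Vs by (rule finite_subset)
  have "card ?X = 2 * card VW"
    using card_UL UL_subset \<open>VW \<subseteq> V\<close> sides_disjoint \<open>finite ?X\<close>
    by (subst card_Un_disjoint) auto
  have "card (nbrs ?X E x) = 1" if "x \<in> ?X" for x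
  proof (cases "x \<in> UL")
    case True
    then obtain w where "w \<in> VW" "nbrs Vs E x = {w}" using UL_nbrs by blast
    then have "nbrs ?X E x = {w}"
      using \<open>?X \<subseteq> Vs\<close> by (auto simp: nbrs_def)
    then show ?thesis by simp
  next
    case False
    with that have "x \<in> VW" by blast
    then obtain u where u: "{u' \<in> UL. E x u'} = {u}" using VW_partner by blast
    have "nbrs ?X E x = {u' \<in> UL. E x u'}"
      using \<open>x \<in> VW\<close> \<open>VW \<subseteq> V\<close> no_edge_within_V by (auto simp: nbrs_def)
    then show ?thesis using u by simp
  qed
  then show ?thesis
    using alt_indep_sum_one_regular[OF \<open>finite ?X\<close> symp_E irreflp_E] \<open>card ?X = 2 * card VW\<close>
    by simp
qed

lemma alt_indep_sum_unmatched:
  assumes "S \<subseteq> U" "nbhd Vs E S \<noteq> V - VW"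
  shows "alt_indep_sum (UL \<union> (V - nbhd Vs E S)) E = 0"
proof -
  let ?X = "UL \<union> (V - nbhd Vs E S)"
  have "finite ?X"
    using finite_Vs UL_subset Vs_eq by (auto intro: finite_subset)
  have "VW \<subseteq> V" by (auto simp: VW_def)
  then consider v where "v \<in> V - VW" "v \<notin> nbhd Vs E S" | v where "v \<in> VW" "v \<in> nbhd Vs E S"
    using assms nbhd_subset_V by blast
  then show ?thesis
  proof cases
    case (1 v)
    have "nbrs ?X E v = {}"
    proof (intro equals0I)
      fix w assume "w \<in> nbrs ?X E v"
      then have "E v w" "w \<in> UL"
        using 1 no_edge_within_V by (auto simp: nbrs_def)
      moreover have "nbrs Vs E w = {v}"
        using \<open>E v w\<close> \<open>w \<in> UL\<close> symp_E UL_leaves leaf_nbrs[OF graph] by (auto dest: sympD)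
      ultimately show False using 1 UL_nbrs by fastforce
    qed
    then show ?thesis
      using 1 \<open>finite ?X\<close> symp_E irreflp_E by (intro alt_indep_sum_isolated[of _ v]) auto
  next
    case (2 v)
    then obtain u where "u \<in> UL" "E v u" using VW_partner by blast
    then have "nbrs Vs E u = {v}"
      using symp_E UL_leaves leaf_nbrs[OF graph] by (auto dest: sympD)
    moreover have "nbrs ?X E u \<subseteq> nbrs Vs E u \<inter> ?X"
      using edge_in_Vs by (auto simp: nbrs_def)
    moreover have "v \<notin> ?X"
      using 2 \<open>VW \<subseteq> V\<close> UL_subset sides_disjoint by auto
    ultimately have "nbrs ?X E u = {}" by auto
    then show ?thesis
      using \<open>u \<in> UL\<close> \<open>finite ?X\<close> symp_E irreflp_E by (intro alt_indep_sum_isolated[of _ u]) auto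
  qed
qed

lemma gfun_closed_form:
  assumes "S \<subseteq> U - UL"
  shows "gfun Vs E (U - UL) S = of_bool (S = {}) -
    (-1) ^ card S * (if nbhd Vs E S = V - VW then (-1) ^ card VW else 0)"
proof -
  have "indep_set Vs E S"
    using assms Vs_eq no_edge_within_U by (auto simp: indep_set_def)
  moreover have "Vs - (U - UL) - nbhd Vs E S = UL \<union> (V - nbhd Vs E S)"
    using assms nbhd_subset_V[of S] UL_subset Vs_eq sides_disjoint by auto
  moreover have "UL \<union> (V - nbhd Vs E S) = UL \<union> VW" if "nbhd Vs E S = V - VW"
    using that by (auto simp: VW_def)
  ultimately show ?thesis
    using assms gfun_eq_alt_sum[OF finite_Vs] sum_indep_sets_with_trace[OF graph]
      alt_indep_sum_leaf_matching alt_indep_sum_unmatched[of S]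
    by auto
qed

end

theorem lemma5p7:
  fixes Vs :: "'a set" and E :: "'a \<Rightarrow> 'a \<Rightarrow> bool" and U V UL VW :: "'a set"
  assumes "simple_graph Vs E"
    and "connected_graph Vs E"
    and "bipartition Vs E U V"
    and "card U \<ge> card V"
    and VW_def: "VW = {v \<in> V. \<exists>u. E v u \<and> leaf Vs E u}"
    and "UL \<subseteq> U"
    and "\<forall>u\<in>UL. leaf Vs E u"
    and "\<forall>v\<in>VW. card {u \<in> UL. E v u} = 1"
    and "card UL = card VW"
    and "V - VW \<noteq> {}"
  shows "gfun Vs E (U - UL) {} = 1 \<and>
         (\<forall>S. S \<subseteq> U - UL \<longrightarrow> S \<noteq> {} \<longrightarrow>
           gfun Vs E (U - UL) S =
             (if nbhd Vs E S = V - VW then (-1) ^ (card S + card VW + 1) else 0))"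
proof -
  interpret bipartite_leaf_matching Vs E U V UL VW
    using assms(1,3,5-9) by unfold_locales
  have "nbhd Vs E {} \<noteq> V - VW"
    using \<open>V - VW \<noteq> {}\<close> by (simp add: nbhd_def)
  then show ?thesis
    using gfun_closed_form by (auto simp: power_add)
qed

end
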